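(* For any $x,y\in\mathbb{R}^d$, $$\|x\odot\texttt{FLT}_\alpha(x)\|_1-\|x\odot\texttt{FLT}_\alpha(y)\|_1\le2\|x-y\|_1.$$
   Context: The coordinates of $\mathbb{R}^d$ are partitioned into $B$ blocks of sizes $d_1,\dots,d_B$ with $\sum_kd_k=d$; write $z=(z^{(1)},\dots,z^{(B)})$, $z^{(k)}\in\mathbb{R}^{d_k}$. Fix $\alpha\%\in(0,1]$. The top-$\alpha\%$ filter $\texttt{FLT}_\alpha(z)\in\{0,1\}^d$ is defined blockwise: in block $k$ it equals $1$ exactly on a set $S_k$ of $\lceil d_k\cdot\alpha\%\rceil$ indices whose absolute values $|z^{(k)}_i|$ rank within the top-$\alpha\%$ of the block (ties broken in favour of smaller indices), and $0$ elsewhere. $\odot$ is the entrywise product. *)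

theory Defs
  imports Complex_Main
begin

text \<open>Vectors in R^d are functions nat => real; only coordinates 0..<d matter.
  The block structure is a list ds = [d_1,...,d_B] of block sizes; block k
  (0-based) consists of the contiguous coordinates
  blk_start ds k ..< blk_start ds k + ds!k.\<close>

definition blk_start :: "nat list \<Rightarrow> nat \<Rightarrow> nat" where
  "blk_start ds k = sum_list (take k ds)"

definition block :: "nat list \<Rightarrow> nat \<Rightarrow> nat set" where
  "block ds k = {blk_start ds k ..< blk_start ds k + ds ! k}"

text \<open>Rank of coordinate i inside the index set A with respect to |z|, ties broken
  in favour of smaller indices (rank 0 = largest).\<close>
definition rank_in :: "nat set \<Rightarrow> (nat \<Rightarrow> real) \<Rightarrow> nat \<Rightarrow> nat" where
  "rank_in A z i = card {j \<in> A. \<bar>z j\<bar> > \<bar>z i\<bar> \<or> (\<bar>z j\<bar> = \<bar>z i\<bar> \<and> j < i)}"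

definition FLT :: "nat list \<Rightarrow> real \<Rightarrow> (nat \<Rightarrow> real) \<Rightarrow> nat \<Rightarrow> real" where
  "FLT ds \<alpha> z i =
     (if \<exists>k < length ds. i \<in> block ds k \<and>
                          rank_in (block ds k) z i < nat \<lceil>real (ds ! k) * \<alpha>\<rceil>
      then 1 else 0)"

definition norm1 :: "nat \<Rightarrow> (nat \<Rightarrow> real) \<Rightarrow> real" where
  "norm1 d x = (\<Sum>i<d. \<bar>x i\<bar>)"

end

theory Submission
  imports Defs
begin

text \<open>In each block the top sets S of x and T of y have the same size, so the common part
  cancels and only x on S - T against x on T - S remains. Passing from x to y on both sets costs
  at most the l1 distance there, and then every y-value on S - T is dominated by every y-value
  on T - S, two sets of equal size. Summing over the blocks gives the bound even with constant 1,
  and for every \<alpha> \<le> 1.\<close>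

lemma rank_in_less:
  assumes "finite A" "i \<in> A" "j \<in> A"
    and "\<bar>z j\<bar> > \<bar>z i\<bar> \<or> (\<bar>z j\<bar> = \<bar>z i\<bar> \<and> j < i)"
  shows "rank_in A z j < rank_in A z i"
  unfolding rank_in_def by (rule psubset_card_mono) (use assms in auto)

lemma inj_on_rank_in:
  assumes "finite A"
  shows "inj_on (rank_in A z) A"
proof (rule inj_onI, rule ccontr)
  fix i j assume "i \<in> A" "j \<in> A" "rank_in A z i = rank_in A z j" "i \<noteq> j"
  then show False
    using rank_in_less[OF assms \<open>i \<in> A\<close> \<open>j \<in> A\<close>] rank_in_less[OF assms \<open>j \<in> A\<close> \<open>i \<in> A\<close>]
    by (metis less_irrefl linorder_neqE_linordered_idom linorder_neqE_nat)
qed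

lemma rank_in_less_card:
  assumes "finite A" "i \<in> A"
  shows "rank_in A z i < card A"
  unfolding rank_in_def by (rule psubset_card_mono) (use assms in auto)

lemma rank_in_image:
  assumes "finite A"
  shows "rank_in A z ` A = {..<card A}"
proof (rule card_subset_eq)
  show "rank_in A z ` A \<subseteq> {..<card A}"
    using rank_in_less_card[OF assms] by auto
  show "card (rank_in A z ` A) = card {..<card A}"
    using card_image[OF inj_on_rank_in[OF assms]] by simp
qed simp

definition top_indices :: "nat set \<Rightarrow> (nat \<Rightarrow> real) \<Rightarrow> nat \<Rightarrow> nat set" where
  "top_indices A z m = {i \<in> A. rank_in A z i < m}"

lemma card_top_indices:
  assumes "finite A" "m \<le> card A"
  shows "card (top_indices A z m) = m"
proof -
  have "rank_in A z ` top_indices A z m = {r \<in> rank_in A z ` A. r < m}"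
    unfolding top_indices_def by auto
  also have "\<dots> = {..<m}"
    using rank_in_image[OF assms(1)] assms(2) by auto
  finally have "card (rank_in A z ` top_indices A z m) = m" by simp
  moreover have "inj_on (rank_in A z) (top_indices A z m)"
    by (rule inj_on_subset[OF inj_on_rank_in[OF assms(1)]]) (auto simp: top_indices_def)
  ultimately show ?thesis by (simp add: card_image)
qed

lemma top_indices_subset: "top_indices A z m \<subseteq> A"
  unfolding top_indices_def by auto

lemma top_indices_dominate:
  assumes "finite A" "i \<in> A - top_indices A z m" "j \<in> top_indices A z m"
  shows "\<bar>z i\<bar> \<le> \<bar>z j\<bar>"
proof (rule ccontr)
  assume "\<not> \<bar>z i\<bar> \<le> \<bar>z j\<bar>"
  then have "rank_in A z i < rank_in A z j"
    using assms by (intro rank_in_less) (auto simp: top_indices_def)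
  then show False using assms by (auto simp: top_indices_def)
qed

lemma sum_le_sum_of_card_eq:
  fixes g :: "'a \<Rightarrow> 'b::ordered_comm_monoid_add"
  assumes "finite P" "finite Q" "card P = card Q"
    and "\<And>i j. i \<in> P \<Longrightarrow> j \<in> Q \<Longrightarrow> g i \<le> g j"
  shows "sum g P \<le> sum g Q"
proof -
  obtain h where h: "bij_betw h P Q"
    using finite_same_card_bij[OF assms(1-3)] by blast
  have "sum g P \<le> sum (g \<circ> h) P"
    using h assms(4) by (intro sum_mono) (auto simp: bij_betw_def)
  also have "\<dots> = sum g Q"
    using sum.reindex_bij_betw[OF h] by simp
  finally show ?thesis .
qed

lemma sum_abs_diff_le_of_dominating:
  fixes x y :: "'a \<Rightarrow> real"
  assumes "finite A" "S \<subseteq> A" "T \<subseteq> A" "card S = card T"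
    and dominate: "\<And>i j. i \<in> A - T \<Longrightarrow> j \<in> T \<Longrightarrow> \<bar>y i\<bar> \<le> \<bar>y j\<bar>"
  shows "(\<Sum>i\<in>S. \<bar>x i\<bar>) - (\<Sum>i\<in>T. \<bar>x i\<bar>) \<le> (\<Sum>i\<in>A. \<bar>x i - y i\<bar>)"
proof -
  have fin: "finite S" "finite T"
    using assms(1-3) finite_subset by auto
  have "card (S - T) = card (T - S)"
    using assms(4) fin by (simp add: card_Diff_subset_Int Int_commute)
  then have swap: "(\<Sum>i\<in>S - T. \<bar>y i\<bar>) \<le> (\<Sum>i\<in>T - S. \<bar>y i\<bar>)"
    using fin assms(2) by (intro sum_le_sum_of_card_eq dominate) auto
  have "(\<Sum>i\<in>S. \<bar>x i\<bar>) - (\<Sum>i\<in>T. \<bar>x i\<bar>) = (\<Sum>i\<in>S - T. \<bar>x i\<bar>) - (\<Sum>i\<in>T - S. \<bar>x i\<bar>)"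
    using sum.Int_Diff[OF fin(1), of "\<lambda>i. \<bar>x i\<bar>" T] sum.Int_Diff[OF fin(2), of "\<lambda>i. \<bar>x i\<bar>" S]
    by (simp add: Int_commute)
  also have "\<dots> \<le> (\<Sum>i\<in>S - T. \<bar>x i - y i\<bar>) + (\<Sum>i\<in>T - S. \<bar>x i - y i\<bar>)"
  proof -
    have "(\<Sum>i\<in>S - T. \<bar>x i\<bar>) \<le> (\<Sum>i\<in>S - T. \<bar>y i\<bar> + \<bar>x i - y i\<bar>)"
      by (rule sum_mono) linarith
    moreover have "(\<Sum>i\<in>T - S. \<bar>y i\<bar>) \<le> (\<Sum>i\<in>T - S. \<bar>x i\<bar> + \<bar>x i - y i\<bar>)"
      by (rule sum_mono) linarith
    ultimately show ?thesis
      using swap by (simp add: sum.distrib)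
  qed
  also have "\<dots> = (\<Sum>i\<in>(S - T) \<union> (T - S). \<bar>x i - y i\<bar>)"
    using fin by (intro sum.union_disjoint[symmetric]) auto
  also have "\<dots> \<le> (\<Sum>i\<in>A. \<bar>x i - y i\<bar>)"
    using assms(1-3) by (intro sum_mono2) auto
  finally show ?thesis .
qed

lemma sum_abs_top_indices_diff_le:
  fixes x y :: "nat \<Rightarrow> real"
  assumes "finite A" "m \<le> card A"
  shows "(\<Sum>i\<in>top_indices A x m. \<bar>x i\<bar>) - (\<Sum>i\<in>top_indices A y m. \<bar>x i\<bar>)
           \<le> (\<Sum>i\<in>A. \<bar>x i - y i\<bar>)"
  using assms top_indices_subset
  by (intro sum_abs_diff_le_of_dominating top_indices_dominate) (simp_all add: card_top_indices)

lemma blk_start_Suc: "k < length ds \<Longrightarrow> blk_start ds (Suc k) = blk_start ds k + ds ! k"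
  unfolding blk_start_def by (simp add: take_Suc_conv_app_nth)

lemma blk_start_mono: "k \<le> k' \<Longrightarrow> blk_start ds k \<le> blk_start ds k'"
  unfolding blk_start_def
  by (metis le_add1 le_add_diff_inverse sum_list_append take_add)

lemma block_disjoint:
  assumes "k < k'" "k < length ds"
  shows "block ds k \<inter> block ds k' = {}"
proof -
  have "blk_start ds k + ds ! k \<le> blk_start ds k'"
    using blk_start_Suc[OF assms(2)] blk_start_mono[of "Suc k" k' ds] assms(1) by simp
  then show ?thesis unfolding block_def by auto
qed

lemma FLT_on_block:
  assumes "k < length ds" "i \<in> block ds k"
  shows "FLT ds \<alpha> z i =
           (if i \<in> top_indices (block ds k) z (nat \<lceil>real (ds ! k) * \<alpha>\<rceil>) then 1 else 0)"
proof -
  have "k' = k" if "k' < length ds" "i \<in> block ds k'" for k'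
  proof (rule linorder_cases[of k' k])
    assume "k' < k"
    then show ?thesis using block_disjoint[of k' k ds] assms that by blast
  next
    assume "k < k'"
    then show ?thesis using block_disjoint[of k k' ds] assms that by blast
  qed
  then have "(\<exists>k' < length ds. i \<in> block ds k' \<and>
                 rank_in (block ds k') z i < nat \<lceil>real (ds ! k') * \<alpha>\<rceil>)
             \<longleftrightarrow> rank_in (block ds k) z i < nat \<lceil>real (ds ! k) * \<alpha>\<rceil>"
    using assms by blast
  then show ?thesis
    unfolding FLT_def top_indices_def using assms(2) by simp
qed

lemma sum_blk_start_eq_sum_blocks:
  "n \<le> length ds \<Longrightarrow> (\<Sum>i<blk_start ds n. h i) = (\<Sum>k<n. \<Sum>i\<in>block ds k. h i)"
proof (induction n)
  case 0
  then show ?case unfolding blk_start_def by simp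
next
  case (Suc n)
  then have n: "n < length ds" by simp
  have "(\<Sum>i<blk_start ds (Suc n). h i)
      = (\<Sum>i\<in>{0..<blk_start ds n}. h i) + (\<Sum>i\<in>{blk_start ds n..<blk_start ds n + ds ! n}. h i)"
    unfolding blk_start_Suc[OF n] lessThan_atLeast0
    by (rule sum.atLeastLessThan_concat[symmetric]) simp_all
  also have "\<dots> = (\<Sum>k<n. \<Sum>i\<in>block ds k. h i) + (\<Sum>i\<in>block ds n. h i)"
    using Suc n unfolding block_def lessThan_atLeast0[symmetric] by simp
  finally show ?case by simp
qed

lemma sum_lessThan_sum_list_eq_sum_blocks:
  "(\<Sum>i<sum_list ds. h i) = (\<Sum>k<length ds. \<Sum>i\<in>block ds k. h i)"
  using sum_blk_start_eq_sum_blocks[of "length ds" ds h] by (simp add: blk_start_def)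

lemma nat_ceiling_mult_le:
  assumes "\<alpha> \<le> 1"
  shows "nat \<lceil>real n * \<alpha>\<rceil> \<le> n"
proof -
  have "real n * \<alpha> \<le> real n" using assms by (simp add: mult_left_le)
  then show ?thesis by (simp add: ceiling_le_iff nat_le_iff)
qed

lemma block_FLT_diff_le:
  fixes x y :: "nat \<Rightarrow> real"
  assumes "k < length ds" "\<alpha> \<le> 1"
  shows "(\<Sum>i\<in>block ds k. \<bar>x i\<bar> * FLT ds \<alpha> x i) - (\<Sum>i\<in>block ds k. \<bar>x i\<bar> * FLT ds \<alpha> y i)
           \<le> (\<Sum>i\<in>block ds k. \<bar>x i - y i\<bar>)"
proof -
  define A where "A = block ds k"
  define m where "m = nat \<lceil>real (ds ! k) * \<alpha>\<rceil>"
  have A: "finite A" "card A = ds ! k" unfolding A_def block_def by simp_all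
  have restrict: "(\<Sum>i\<in>A. \<bar>x i\<bar> * FLT ds \<alpha> z i) = (\<Sum>i\<in>top_indices A z m. \<bar>x i\<bar>)" for z
  proof -
    have "(\<Sum>i\<in>A. \<bar>x i\<bar> * FLT ds \<alpha> z i) = (\<Sum>i\<in>A. if i \<in> top_indices A z m then \<bar>x i\<bar> else 0)"
      by (rule sum.cong) (simp_all add: FLT_on_block[OF assms(1)] A_def m_def)
    also have "\<dots> = (\<Sum>i\<in>{i \<in> A. i \<in> top_indices A z m}. \<bar>x i\<bar>)"
      by (rule sum.inter_filter[OF A(1), symmetric])
    also have "{i \<in> A. i \<in> top_indices A z m} = top_indices A z m"
      using top_indices_subset by blast
    finally show ?thesis .
  qed
  have "m \<le> card A"
    using nat_ceiling_mult_le[OF assms(2)] by (simp add: m_def A(2))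
  then show ?thesis
    unfolding A_def[symmetric] restrict by (rule sum_abs_top_indices_diff_le[OF A(1)])
qed

lemma norm1_FLT_diff_le:
  assumes "d = sum_list ds" "\<alpha> \<le> 1"
  shows "norm1 d (\<lambda>i. x i * FLT ds \<alpha> x i) - norm1 d (\<lambda>i. x i * FLT ds \<alpha> y i)
           \<le> norm1 d (\<lambda>i. x i - y i)"
proof -
  have abs_FLT: "\<bar>x i * FLT ds \<alpha> z i\<bar> = \<bar>x i\<bar> * FLT ds \<alpha> z i" for i z
    by (simp add: FLT_def abs_mult)
  have "norm1 d (\<lambda>i. x i * FLT ds \<alpha> x i) - norm1 d (\<lambda>i. x i * FLT ds \<alpha> y i)
      = (\<Sum>k<length ds. (\<Sum>i\<in>block ds k. \<bar>x i\<bar> * FLT ds \<alpha> x i)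
                       - (\<Sum>i\<in>block ds k. \<bar>x i\<bar> * FLT ds \<alpha> y i))"
    unfolding norm1_def abs_FLT assms(1) sum_lessThan_sum_list_eq_sum_blocks sum_subtractf ..
  also have "\<dots> \<le> (\<Sum>k<length ds. \<Sum>i\<in>block ds k. \<bar>x i - y i\<bar>)"
    using assms(2) by (intro sum_mono block_FLT_diff_le) simp_all
  also have "\<dots> = norm1 d (\<lambda>i. x i - y i)"
    unfolding norm1_def assms(1) sum_lessThan_sum_list_eq_sum_blocks ..
  finally show ?thesis .
qed

theorem lemma1:
  fixes ds :: "nat list" and d :: nat and \<alpha> :: real and x y :: "nat \<Rightarrow> real"
  assumes "d = sum_list ds"
    and "0 < \<alpha>" and "\<alpha> \<le> 1"
  shows "norm1 d (\<lambda>i. x i * FLT ds \<alpha> x i) - norm1 d (\<lambda>i. x i * FLT ds \<alpha> y i)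
           \<le> 2 * norm1 d (\<lambda>i. x i - y i)"
proof -
  have "0 \<le> norm1 d (\<lambda>i. x i - y i)"
    unfolding norm1_def by (simp add: sum_nonneg)
  then show ?thesis
    using norm1_FLT_diff_le[OF assms(1,3), of x y] by linarith
qed

end
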